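(* Let $f, g:\mathbb{D}\to\mathbb{C}$ be analytic functions on the open unit disc $\mathbb{D}$, and let $L_1, L_2$ be two $C^1$ curves in $\mathbb{D}$ intersecting at an angle $\theta\in(0,\pi/2]\setminus\pi\mathbb{Q}$, such that $|f(z)|=|g(z)|$ for all $z\in L_1\cup L_2$. Then $f=\beta g$ for some constant $\beta\in\mathbb{T}$.
   Context: $\mathbb{D}=\{z\in\mathbb{C}:|z|<1\}$ and $\mathbb{T}=\{z\in\mathbb{C}:|z|=1\}$. $\pi\mathbb{Q}$ denotes the set of rational multiples of $\pi$. *)

theory Defs
  imports "HOL-Analysis.Analysis"
begin

definition C1_curve_in_disc :: "(real \<Rightarrow> complex) \<Rightarrow> bool" where
  "C1_curve_in_disc \<gamma> \<longleftrightarrow> \<gamma> C1_differentiable_on {0..1} \<and> path_image \<gamma> \<subseteq> ball 0 1"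

text \<open>Angle in [0, pi/2] between the (unoriented) lines spanned by nonzero complex
  numbers a and b.\<close>
definition line_angle :: "complex \<Rightarrow> complex \<Rightarrow> real" where
  "line_angle a b = arccos (\<bar>Re (a * cnj b)\<bar> / (norm a * norm b))"

definition curves_intersect_at_angle ::
  "(real \<Rightarrow> complex) \<Rightarrow> (real \<Rightarrow> complex) \<Rightarrow> real \<Rightarrow> bool" where
  "curves_intersect_at_angle \<gamma>1 \<gamma>2 \<theta> \<longleftrightarrow>
     (\<exists>s t. s \<in> {0<..<1} \<and> t \<in> {0<..<1} \<and> \<gamma>1 s = \<gamma>2 t \<and>
        vector_derivative \<gamma>1 (at s) \<noteq> 0 \<and> vector_derivative \<gamma>2 (at t) \<noteq> 0 \<and>
        line_angle (vector_derivative \<gamma>1 (at s)) (vector_derivative \<gamma>2 (at t)) = \<theta>)"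

end

theory Submission
  imports Defs "HOL-Complex_Analysis.Complex_Analysis"
begin

text \<open>If neither function vanishes identically, \<open>|f| = |g|\<close> along a curve through the
  intersection point \<open>p\<close> forces \<open>f\<close> and \<open>g\<close> to vanish to the same order at \<open>p\<close>, so
  \<open>f = h g\<close> near \<open>p\<close> with \<open>h\<close> holomorphic and \<open>|h| = 1\<close> on both curves. If \<open>h\<close> were not
  constant, then \<open>h = c + (z - p)^m K\<close> with \<open>|c| = 1\<close>, \<open>K p \<noteq> 0\<close>, and expanding
  \<open>|h (L x)|^2 = 1\<close> to leading order along a curve \<open>L\<close> with tangent \<open>v\<close> at \<open>p\<close> gives
  \<open>Re (cnj c * K p * v^m) = 0\<close>. For both tangents this makes \<open>(v1 * cnj v2)^m\<close> real, so \<open>m\<close>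
  times the angle is a multiple of \<open>pi\<close>. Hence \<open>h\<close> is a unimodular constant and
  analytic continuation finishes the proof.\<close>

lemma rational_multiple_of_pi_if_cos_eq:
  assumes "cos x = cos y" "y / pi \<in> \<rat>"
  shows "x / pi \<in> \<rat>"
proof -
  have "sin ((y + x) / 2) = 0 \<or> sin ((x - y) / 2) = 0"
    using assms(1) cos_diff_cos[of y x] by simp
  then obtain i :: int where "(y + x) / 2 = i * pi \<or> (x - y) / 2 = i * pi"
    unfolding sin_zero_iff_int2 by blast
  hence "x / pi = 2 * i - y / pi \<or> x / pi = 2 * i + y / pi"
    by (auto simp: field_simps)
  thus ?thesis
    using assms(2) by (metis Rats_add Rats_diff Rats_mult Rats_of_int Rats_number_of)
qed

lemma line_angle_rational_if_power_real:
  fixes a b :: complex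
  assumes "a \<noteq> 0" "b \<noteq> 0" "m > 0" "Im ((a * cnj b) ^ m) = 0"
  shows "line_angle a b / pi \<in> \<rat>"
proof -
  define \<phi> where "\<phi> = Arg (a * cnj b)"
  have "(a * cnj b) ^ m = rcis (norm (a * cnj b) ^ m) (m * \<phi>)"
    unfolding \<phi>_def by (metis DeMoivre2 rcis_cmod_Arg)
  hence "sin (m * \<phi>) = 0"
    using assms by (simp add: norm_mult)
  then obtain i :: int where "m * \<phi> = i * pi"
    unfolding sin_zero_iff_int2 by blast
  hence "\<phi> / pi = of_int i / of_nat m"
    using assms(3) by (auto simp: field_simps)
  hence \<phi>_rat: "\<phi> / pi \<in> \<rat>"
    by (metis Rats_divide Rats_of_int Rats_of_nat)
  obtain \<psi> where \<psi>: "\<bar>cos \<phi>\<bar> = cos \<psi>" "\<psi> / pi \<in> \<rat>"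
  proof (cases "cos \<phi> \<ge> 0")
    case True
    with \<phi>_rat that[of \<phi>] show ?thesis by simp
  next
    case False
    have "(pi - \<phi>) / pi = 1 - \<phi> / pi" by (simp add: field_simps)
    with \<phi>_rat False that[of "pi - \<phi>"] show ?thesis by simp
  qed
  have "line_angle a b = arccos \<bar>cos \<phi>\<bar>"
    using assms(1,2) cos_Arg[of "a * cnj b"]
    by (simp add: line_angle_def \<phi>_def norm_mult)
  moreover have "cos (arccos \<bar>cos \<phi>\<bar>) = cos \<psi>"
    using \<psi>(1) by (simp add: cos_arccos_abs)
  ultimately show ?thesis
    using rational_multiple_of_pi_if_cos_eq \<psi>(2) by simp
qed

lemma Im_mult_cnj_eq_0_if_Re_mult_eq_0:
  fixes d a b :: complex
  assumes "Re (d * a) = 0" "Re (d * b) = 0" "d \<noteq> 0"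
  shows "Im (a * cnj b) = 0"
proof -
  have "(d * a) * cnj (d * b) = of_real (norm d ^ 2) * (a * cnj b)"
    by (simp add: complex_norm_square mult_ac del: of_real_power)
  moreover have "Im ((d * a) * cnj (d * b)) = 0"
    using assms(1,2) by simp
  ultimately have "norm d ^ 2 * Im (a * cnj b) = 0"
    by (simp only: times_complex.sel Im_complex_of_real Re_complex_of_real mult_zero_left add_0)
  thus ?thesis
    using assms(3) by simp
qed

lemma line_angle_rational_if_Re_mult_powers_eq_0:
  fixes a b d :: complex
  assumes "a \<noteq> 0" "b \<noteq> 0" "m > 0" "Re (d * a ^ m) = 0" "Re (d * b ^ m) = 0" "d \<noteq> 0"
  shows "line_angle a b / pi \<in> \<rat>"
proof -
  have "Im (a ^ m * cnj (b ^ m)) = 0"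
    using assms(4-6) by (rule Im_mult_cnj_eq_0_if_Re_mult_eq_0)
  moreover have "(a * cnj b) ^ m = a ^ m * cnj (b ^ m)"
    by (simp add: power_mult_distrib)
  ultimately show ?thesis
    using line_angle_rational_if_power_real[OF assms(1-3)] by simp
qed

lemma has_vector_derivative_imp_difference_quotient_tendsto:
  fixes L :: "real \<Rightarrow> 'a::real_normed_field"
  assumes "(L has_vector_derivative v) (at s)"
  shows "((\<lambda>x. (L x - L s) / of_real (x - s)) \<longlongrightarrow> v) (at s)"
proof -
  have "((\<lambda>x. norm (L x - L s - (x - s) *\<^sub>R v) / norm (x - s)) \<longlongrightarrow> 0) (at s)"
    using assms unfolding has_vector_derivative_def has_derivative_iff_norm by blast
  moreover have "\<forall>\<^sub>F x in at s. norm (L x - L s - (x - s) *\<^sub>R v) / norm (x - s)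
      = norm ((L x - L s) / of_real (x - s) - v)"
    using eventually_neq_at_within[of s s UNIV]
  proof eventually_elim
    case (elim x)
    hence "(L x - L s) / of_real (x - s) - v = (L x - L s - (x - s) *\<^sub>R v) / of_real (x - s)"
      by (simp add: field_simps scaleR_conv_of_real)
    thus ?case
      by (simp add: norm_divide del: of_real_diff)
  qed
  ultimately have "((\<lambda>x. norm ((L x - L s) / of_real (x - s) - v)) \<longlongrightarrow> 0) (at s)"
    by (rule Lim_transform_eventually)
  thus ?thesis
    by (simp only: tendsto_norm_zero_iff LIM_zero_iff)
qed

lemma filterlim_at_if_has_vector_derivative_nonzero:
  fixes L :: "real \<Rightarrow> 'a::real_normed_field"
  assumes "(L has_vector_derivative v) (at s)" "v \<noteq> 0"
  shows "filterlim L (at (L s)) (at s)"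
proof (rule filterlim_atI)
  show "(L \<longlongrightarrow> L s) (at s)"
    using has_vector_derivative_continuous[OF assms(1)] by (simp add: continuous_at)
  have "\<forall>\<^sub>F x in at s. (L x - L s) / of_real (x - s) \<noteq> 0"
    using has_vector_derivative_imp_difference_quotient_tendsto[OF assms(1)] assms(2)
    by (rule tendsto_imp_eventually_ne)
  thus "\<forall>\<^sub>F x in at s. L x \<noteq> L s"
    by eventually_elim auto
qed

lemma holomorphic_eq_0_if_eventually_0_along:
  fixes f :: "complex \<Rightarrow> complex"
  assumes f: "f holomorphic_on S" and S: "open S" "connected S" "p \<in> S"
    and G: "G \<le> at p" "G \<noteq> bot" and zero: "eventually (\<lambda>z. f z = 0) G"
    and "z \<in> S"
  shows "f z = 0"
proof (rule analytic_continuation[OF f S(1,2) _ S(3)])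
  show "p islimpt {z \<in> S. f z = 0}"
  proof (rule ccontr)
    assume "\<not> p islimpt {z \<in> S. f z = 0}"
    hence "eventually (\<lambda>z. z \<notin> {z \<in> S. f z = 0}) G"
      using G(1) filter_leD islimpt_iff_eventually by blast
    moreover have "eventually (\<lambda>z. z \<in> S) G"
      using G(1) S(1,3) eventually_at_in_open' filter_leD by blast
    ultimately have "eventually (\<lambda>_. False) G"
      using zero by eventually_elim auto
    with G(2) show False
      by simp
  qed
qed (use \<open>z \<in> S\<close> in auto)

lemma holomorphic_eq_0_if_norm_eq_along_zero:
  fixes f g :: "complex \<Rightarrow> complex"
  assumes f: "f holomorphic_on S" and S: "open S" "connected S" "p \<in> S"
    and G: "G \<le> at p" "G \<noteq> bot" and norm_eq: "eventually (\<lambda>z. norm (f z) = norm (g z)) G"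
    and g: "\<forall>z\<in>S. g z = 0"
  shows "\<forall>z\<in>S. f z = 0"
proof -
  have "eventually (\<lambda>z. z \<in> S) G"
    using G(1) S(1,3) eventually_at_in_open' filter_leD by blast
  with norm_eq have "eventually (\<lambda>z. f z = 0) G"
    by eventually_elim (use g in simp)
  thus ?thesis
    using holomorphic_eq_0_if_eventually_0_along[OF f S G] by blast
qed

lemma exponent_le_if_norm_eq_along:
  fixes u w :: "'a::real_normed_field \<Rightarrow> 'a"
  assumes "G \<le> at p" "G \<noteq> bot" "isCont u p" "isCont w p" "w p \<noteq> 0"
    and "eventually (\<lambda>z. norm ((z - p) ^ k * u z) = norm ((z - p) ^ l * w z)) G"
  shows "k \<le> l"
proof (rule ccontr)
  assume "\<not> k \<le> l"
  hence "k = l + (k - l)" "k - l > 0" by auto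
  have "eventually (\<lambda>z. z \<noteq> p) G"
    using assms(1) eventually_at_filter filter_leD by fastforce
  hence eq: "eventually (\<lambda>z. norm (z - p) ^ (k - l) * norm (u z) = norm (w z)) G"
    using assms(6)
  proof eventually_elim
    case (elim z)
    hence "norm (z - p) ^ l * (norm (z - p) ^ (k - l) * norm (u z)) = norm (z - p) ^ l * norm (w z)"
      using \<open>k = l + (k - l)\<close> by (metis norm_mult norm_power power_add mult.assoc)
    with elim show ?case by simp
  qed
  have "((\<lambda>z. norm (z - p) ^ (k - l) * norm (u z)) \<longlongrightarrow> 0) G"
  proof (rule tendsto_mono[OF assms(1)])
    have "((\<lambda>z. norm (z - p) ^ (k - l) * norm (u z))
        \<longlongrightarrow> norm (p - p) ^ (k - l) * norm (u p)) (at p)"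
      using assms(3) by (intro tendsto_intros) (simp_all add: isCont_def)
    thus "((\<lambda>z. norm (z - p) ^ (k - l) * norm (u z)) \<longlongrightarrow> 0) (at p)"
      using \<open>k - l > 0\<close> by (simp add: power_0_left)
  qed
  hence "((\<lambda>z. norm (w z)) \<longlongrightarrow> 0) G"
    using eq by (rule Lim_transform_eventually)
  moreover have "((\<lambda>z. norm (w z)) \<longlongrightarrow> norm (w p)) G"
    using assms(1,4) by (intro tendsto_norm tendsto_mono[OF assms(1)]) (simp add: isCont_def)
  ultimately show False
    using assms(2,5) tendsto_unique by fastforce
qed

lemma holomorphic_on_ball_imp_isCont_centre:
  "f holomorphic_on ball p r \<Longrightarrow> r > 0 \<Longrightarrow> isCont f p"
  by (simp add: analytic_at_imp_isCont holomorphic_on_imp_analytic_at)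

lemma holomorphic_quotient_if_norm_eq_along:
  fixes f g :: "complex \<Rightarrow> complex"
  assumes f: "f holomorphic_on S" and g: "g holomorphic_on S"
    and S: "open S" "connected S" "p \<in> S"
    and G: "G \<le> at p" "G \<noteq> bot"
    and f_nz: "\<exists>z\<in>S. f z \<noteq> 0" and g_nz: "\<exists>z\<in>S. g z \<noteq> 0"
    and norm_eq: "eventually (\<lambda>z. norm (f z) = norm (g z)) G"
  obtains r h where "r > 0" "ball p r \<subseteq> S" "h holomorphic_on ball p r"
    "\<And>z. z \<in> ball p r \<Longrightarrow> f z = h z * g z"
    "\<And>z. z \<in> ball p r - {p} \<Longrightarrow> g z \<noteq> 0"
proof -
  define k u where "k = nat (zorder f p)" and "u = zor_poly f p"
  define l w where "l = nat (zorder g p)" and "w = zor_poly g p"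
  obtain r1 where r1: "r1 > 0" "cball p r1 \<subseteq> S" "u holomorphic_on cball p r1"
    "\<And>z. z \<in> cball p r1 \<Longrightarrow> f z = u z * (z - p) ^ k \<and> u z \<noteq> 0"
    using zorder_exist_zero[OF f S f_nz] unfolding k_def u_def by blast
  obtain r2 where r2: "r2 > 0" "cball p r2 \<subseteq> S" "w holomorphic_on cball p r2"
    "\<And>z. z \<in> cball p r2 \<Longrightarrow> g z = w z * (z - p) ^ l \<and> w z \<noteq> 0"
    using zorder_exist_zero[OF g S g_nz] unfolding l_def w_def by blast
  define r where "r = min r1 r2"
  have r: "r > 0" "ball p r \<subseteq> cball p r1" "ball p r \<subseteq> cball p r2"
    using r1(1) r2(1) by (auto simp: r_def)
  have fac: "f z = (z - p) ^ k * u z \<and> u z \<noteq> 0 \<and> g z = (z - p) ^ l * w z \<and> w z \<noteq> 0"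
    if "z \<in> ball p r" for z
    using r1(4)[OF subsetD[OF r(2) that]] r2(4)[OF subsetD[OF r(3) that]] by (simp add: mult.commute)
  have u: "u holomorphic_on ball p r" and w: "w holomorphic_on ball p r"
    using r r1(3) r2(3) holomorphic_on_subset by blast+
  have cont: "isCont u p" "isCont w p"
    using u w r(1) by (simp_all add: holomorphic_on_ball_imp_isCont_centre)
  have nz: "u p \<noteq> 0" "w p \<noteq> 0"
    using fac[of p] r(1) by auto
  have ev: "eventually (\<lambda>z. norm ((z - p) ^ k * u z) = norm ((z - p) ^ l * w z)) G"
    using norm_eq filter_leD[OF G(1) eventually_at_ball[OF r(1), of p UNIV]]
    by eventually_elim (use fac in auto)
  have "k \<le> l"
    by (rule exponent_le_if_norm_eq_along[OF G cont nz(2) ev])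
  moreover have "l \<le> k"
    by (rule exponent_le_if_norm_eq_along[OF G cont(2,1) nz(1)]) (rule eventually_mono[OF ev], simp)
  ultimately have "k = l"
    by simp
  show thesis
  proof
    show "(\<lambda>z. u z / w z) holomorphic_on ball p r"
      using u w fac by (intro holomorphic_intros) auto
    show "f z = u z / w z * g z" if "z \<in> ball p r" for z
      using that fac \<open>k = l\<close> by auto
    show "g z \<noteq> 0" if "z \<in> ball p r - {p}" for z
      using that fac by auto
  qed (use r r1(2) in auto)
qed

lemma eventually_norm_eq_1_if_quotient_along:
  fixes f g h :: "'a::real_normed_field \<Rightarrow> 'a"
  assumes L: "filterlim L (at p) F" and "r > 0"
    and quotient: "\<And>z. z \<in> ball p r \<Longrightarrow> f z = h z * g z"
    and g_nz: "\<And>z. z \<in> ball p r - {p} \<Longrightarrow> g z \<noteq> 0"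
    and norm_eq: "eventually (\<lambda>x. norm (f (L x)) = norm (g (L x))) F"
  shows "eventually (\<lambda>x. norm (h (L x)) = 1) F"
proof -
  have "eventually (\<lambda>z. z \<in> ball p r - {p}) (at p)"
    using eventually_at_ball'[OF \<open>r > 0\<close>, of p UNIV] by (auto elim: eventually_mono)
  hence "eventually (\<lambda>x. L x \<in> ball p r - {p}) F"
    using L by (rule eventually_compose_filterlim)
  with norm_eq show ?thesis
    by eventually_elim (use quotient g_nz in \<open>auto simp: norm_mult\<close>)
qed

lemma unimodular_add_real_multiple_iff:
  fixes c q :: complex
  assumes "norm c = 1" "t \<noteq> 0"
  shows "norm (c + of_real t * q) = 1 \<longleftrightarrow> 2 * Re (cnj c * q) + t * norm q ^ 2 = 0"
proof -
  have "Re c ^ 2 + Im c ^ 2 = 1"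
    using assms(1) by (metis cmod_power2 power_one)
  hence "norm (c + of_real t * q) ^ 2 = 1 + t * (2 * Re (cnj c * q) + t * norm q ^ 2)"
    unfolding cmod_power2 by (simp add: algebra_simps power2_eq_square)
  thus ?thesis
    using assms(2) by (metis add_cancel_left_right mult_eq_0_iff norm_ge_zero power_one
        power2_eq_imp_eq zero_le_one)
qed

lemma Re_tangent_power_eq_0_if_unimodular_along:
  fixes L :: "real \<Rightarrow> complex" and h K :: "complex \<Rightarrow> complex"
  assumes L: "(L has_vector_derivative v) (at s)" "L s = p"
    and "r > 0" "m > 0" "norm c = 1"
    and h: "\<And>z. z \<in> ball p r \<Longrightarrow> h z = c + (z - p) ^ m * K z" and "isCont K p"
    and unimod: "eventually (\<lambda>x. norm (h (L x)) = 1) (at s)"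
  shows "Re (cnj c * K p * v ^ m) = 0"
proof -
  \<comment> \<open>near \<open>s\<close>, \<open>Q x = (h (L x) - c) / (x - s) ^ m\<close>\<close>
  define Q where "Q x = ((L x - p) / of_real (x - s)) ^ m * K (L x)" for x
  have L_lim: "(L \<longlongrightarrow> p) (at s)"
    using has_vector_derivative_continuous[OF L(1)] L(2) by (simp add: continuous_at)
  have "(Q \<longlongrightarrow> v ^ m * K p) (at s)"
    unfolding Q_def using has_vector_derivative_imp_difference_quotient_tendsto[OF L(1)] L(2)
    by (intro tendsto_intros isCont_tendsto_compose[OF \<open>isCont K p\<close> L_lim]) simp
  hence "((\<lambda>x. 2 * Re (cnj c * Q x) + (x - s) ^ m * norm (Q x) ^ 2)
      \<longlongrightarrow> 2 * Re (cnj c * (v ^ m * K p)) + (s - s) ^ m * norm (v ^ m * K p) ^ 2) (at s)"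
    by (intro tendsto_intros)
  hence lim: "((\<lambda>x. 2 * Re (cnj c * Q x) + (x - s) ^ m * norm (Q x) ^ 2)
      \<longlongrightarrow> 2 * Re (cnj c * K p * v ^ m)) (at s)"
    using \<open>m > 0\<close> by (simp add: mult_ac power_0_left)
  have "eventually (\<lambda>x. dist (L x) p < r) (at s)"
    using tendstoD[OF L_lim \<open>r > 0\<close>] .
  hence "eventually (\<lambda>x. 2 * Re (cnj c * Q x) + (x - s) ^ m * norm (Q x) ^ 2 = 0) (at s)"
    using unimod eventually_neq_at_within[of s s UNIV]
  proof eventually_elim
    case (elim x)
    define t where "t = (x - s) ^ m"
    have "t \<noteq> 0"
      using elim by (simp add: t_def)
    have "h (L x) = c + of_real t * Q x"
      using elim h[of "L x"] \<open>t \<noteq> 0\<close> by (simp add: Q_def t_def dist_commute power_divide)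
    with elim have "norm (c + of_real t * Q x) = 1"
      by metis
    hence "2 * Re (cnj c * Q x) + t * norm (Q x) ^ 2 = 0"
      using unimodular_add_real_multiple_iff[OF \<open>norm c = 1\<close> \<open>t \<noteq> 0\<close>] by blast
    thus ?case
      unfolding t_def .
  qed
  hence "((\<lambda>x. 2 * Re (cnj c * Q x) + (x - s) ^ m * norm (Q x) ^ 2) \<longlongrightarrow> 0) (at s)"
    by (rule tendsto_eventually)
  with lim show ?thesis
    using tendsto_unique trivial_limit_at by fastforce
qed

lemma norm_eq_1_if_unimodular_along:
  assumes "(L \<longlongrightarrow> p) F" "isCont h p" "F \<noteq> bot"
    and "eventually (\<lambda>x. norm (h (L x)) = 1) F"
  shows "norm (h p) = 1"
proof -
  have "((\<lambda>x. norm (h (L x))) \<longlongrightarrow> norm (h p)) F"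
    by (intro tendsto_norm isCont_tendsto_compose[OF assms(2,1)])
  moreover have "((\<lambda>x. norm (h (L x))) \<longlongrightarrow> 1) F"
    using assms(4) by (rule tendsto_eventually)
  ultimately show ?thesis
    using assms(3) tendsto_unique by blast
qed

lemma unimodular_constant_if_unimodular_on_curves_at_irrational_angle:
  fixes h :: "complex \<Rightarrow> complex" and L1 L2 :: "real \<Rightarrow> complex"
  assumes h: "h holomorphic_on ball p r" and "r > 0"
    and L1: "(L1 has_vector_derivative v1) (at s)" "L1 s = p" "v1 \<noteq> 0"
    and L2: "(L2 has_vector_derivative v2) (at t)" "L2 t = p" "v2 \<noteq> 0"
    and unimod1: "eventually (\<lambda>x. norm (h (L1 x)) = 1) (at s)"
    and unimod2: "eventually (\<lambda>x. norm (h (L2 x)) = 1) (at t)"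
    and irrational: "line_angle v1 v2 / pi \<notin> \<rat>"
  obtains c where "norm c = 1" "\<And>z. z \<in> ball p r \<Longrightarrow> h z = c"
proof -
  have "(L1 \<longlongrightarrow> p) (at s)"
    using has_vector_derivative_continuous[OF L1(1)] L1(2) by (simp add: continuous_at)
  hence c: "norm (h p) = 1"
    using holomorphic_on_ball_imp_isCont_centre[OF h \<open>r > 0\<close>] trivial_limit_at unimod1
    by (rule norm_eq_1_if_unimodular_along)
  have "h z = h p" if z: "z \<in> ball p r" for z
  proof (rule ccontr)
    assume "h z \<noteq> h p"
    have p: "p \<in> ball p r"
      using \<open>r > 0\<close> by simp
    have nonconst: "\<not> (\<lambda>z. h z - h p) constant_on ball p r"
      using p z \<open>h z \<noteq> h p\<close> unfolding constant_on_def by (metis diff_self right_minus_eq)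
    have "(\<lambda>z. h z - h p) holomorphic_on ball p r"
      using h by (intro holomorphic_intros)
    moreover have "(\<lambda>z. h z - h p) p = 0"
      by simp
    ultimately obtain K r' m where "0 < m" "0 < r'" "ball p r' \<subseteq> ball p r"
        "K holomorphic_on ball p r'"
        and K: "\<And>z. z \<in> ball p r' \<Longrightarrow> h z - h p = (z - p) ^ m * K z"
               "\<And>z. z \<in> ball p r' \<Longrightarrow> K z \<noteq> 0"
      by (rule holomorphic_factor_zero_nonconstant[OF _ open_ball connected_ball p _ nonconst]) blast
    have h_eq: "\<And>z. z \<in> ball p r' \<Longrightarrow> h z = h p + (z - p) ^ m * K z"
      using K(1) by (simp add: algebra_simps)
    note K_cont = holomorphic_on_ball_imp_isCont_centre[OF \<open>K holomorphic_on ball p r'\<close> \<open>0 < r'\<close>]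
    have "Re (cnj (h p) * K p * v1 ^ m) = 0"
      by (rule Re_tangent_power_eq_0_if_unimodular_along[OF L1(1,2) \<open>r' > 0\<close> \<open>m > 0\<close> c h_eq
            K_cont unimod1])
    moreover have "Re (cnj (h p) * K p * v2 ^ m) = 0"
      by (rule Re_tangent_power_eq_0_if_unimodular_along[OF L2(1,2) \<open>r' > 0\<close> \<open>m > 0\<close> c h_eq
            K_cont unimod2])
    moreover have "cnj (h p) * K p \<noteq> 0"
      using c K(2)[of p] \<open>r' > 0\<close> by auto
    ultimately have "line_angle v1 v2 / pi \<in> \<rat>"
      using line_angle_rational_if_Re_mult_powers_eq_0[OF L1(3) L2(3) \<open>m > 0\<close>] by blast
    with irrational show False ..
  qed
  with c show thesis
    by (rule that)
qed

lemma unimodular_multiple_if_norm_eq_on_curves_at_irrational_angle: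
  fixes f g :: "complex \<Rightarrow> complex" and L1 L2 :: "real \<Rightarrow> complex"
  assumes f: "f holomorphic_on S" and g: "g holomorphic_on S"
    and S: "open S" "connected S" "p \<in> S"
    and L1: "(L1 has_vector_derivative v1) (at s)" "L1 s = p" "v1 \<noteq> 0"
    and L2: "(L2 has_vector_derivative v2) (at t)" "L2 t = p" "v2 \<noteq> 0"
    and norm_eq1: "eventually (\<lambda>x. norm (f (L1 x)) = norm (g (L1 x))) (at s)"
    and norm_eq2: "eventually (\<lambda>x. norm (f (L2 x)) = norm (g (L2 x))) (at t)"
    and irrational: "line_angle v1 v2 / pi \<notin> \<rat>"
  shows "\<exists>\<beta>. norm \<beta> = 1 \<and> (\<forall>z\<in>S. f z = \<beta> * g z)"
proof -
  define G where "G = filtermap L1 (at s)"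
  have G: "G \<le> at p" "G \<noteq> bot"
    using filterlim_at_if_has_vector_derivative_nonzero[OF L1(1,3)] L1(2)
    by (simp_all add: G_def filterlim_def filtermap_bot_iff)
  have norm_eq: "eventually (\<lambda>z. norm (f z) = norm (g z)) G"
    using norm_eq1 by (simp add: G_def eventually_filtermap)
  show ?thesis
  proof (cases "(\<forall>z\<in>S. f z = 0) \<or> (\<forall>z\<in>S. g z = 0)")
    case True
    moreover have "eventually (\<lambda>z. norm (g z) = norm (f z)) G"
      using norm_eq by (rule eventually_mono) simp
    ultimately have "\<forall>z\<in>S. f z = 0 \<and> g z = 0"
      using holomorphic_eq_0_if_norm_eq_along_zero[OF f S G norm_eq]
        holomorphic_eq_0_if_norm_eq_along_zero[OF g S G] by blast
    thus ?thesis
      by (intro exI[of _ 1]) simp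
  next
    case False
    then obtain r h where "r > 0" "ball p r \<subseteq> S" "h holomorphic_on ball p r"
      and quotient: "\<And>z. z \<in> ball p r \<Longrightarrow> f z = h z * g z"
      and g_nz: "\<And>z. z \<in> ball p r - {p} \<Longrightarrow> g z \<noteq> 0"
      using holomorphic_quotient_if_norm_eq_along[OF f g S G _ _ norm_eq] by blast
    have "eventually (\<lambda>x. norm (h (L1 x)) = 1) (at s)"
      using filterlim_at_if_has_vector_derivative_nonzero[OF L1(1,3)] L1(2)
      by (intro eventually_norm_eq_1_if_quotient_along[OF _ \<open>r > 0\<close> quotient g_nz norm_eq1]) simp
    moreover have "eventually (\<lambda>x. norm (h (L2 x)) = 1) (at t)"
      using filterlim_at_if_has_vector_derivative_nonzero[OF L2(1,3)] L2(2)
      by (intro eventually_norm_eq_1_if_quotient_along[OF _ \<open>r > 0\<close> quotient g_nz norm_eq2]) simp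
    ultimately obtain c where "norm c = 1" and h_eq: "\<And>z. z \<in> ball p r \<Longrightarrow> h z = c"
      by (rule unimodular_constant_if_unimodular_on_curves_at_irrational_angle[OF
          \<open>h holomorphic_on ball p r\<close> \<open>r > 0\<close> L1 L2 _ _ irrational]) blast
    moreover have "f z = c * g z" if "z \<in> S" for z
    proof (rule analytic_continuation_open[OF open_ball S(1) _ S(2) \<open>ball p r \<subseteq> S\<close> f])
      show "(\<lambda>z. c * g z) holomorphic_on S"
        using g by (intro holomorphic_intros)
    qed (use \<open>r > 0\<close> quotient h_eq that in auto)
    ultimately show ?thesis
      by blast
  qed
qed

lemma C1_curve_in_disc_has_vector_derivative:
  assumes "C1_curve_in_disc L" "s \<in> {0<..<1}"
  shows "(L has_vector_derivative vector_derivative L (at s)) (at s)"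
proof -
  have "L differentiable at s"
    using assms unfolding C1_curve_in_disc_def C1_differentiable_on_eq by auto
  thus ?thesis
    using vector_derivative_works by blast
qed

lemma eventually_in_path_image_at_interior:
  assumes "s \<in> {0<..<1}"
  shows "eventually (\<lambda>x. L x \<in> path_image L) (at s)"
proof -
  have "eventually (\<lambda>x. x \<in> {0<..<1}) (at s)"
    using assms by (intro eventually_at_in_open') auto
  thus ?thesis
    by eventually_elim (auto simp: path_image_def)
qed

theorem corollary2p3:
  fixes f g :: "complex \<Rightarrow> complex" and L1 L2 :: "real \<Rightarrow> complex" and \<theta> :: real
  assumes "f holomorphic_on ball 0 1" and "g holomorphic_on ball 0 1"
    and "C1_curve_in_disc L1" and "C1_curve_in_disc L2"
    and "curves_intersect_at_angle L1 L2 \<theta>"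
    and "\<theta> \<in> {0<..pi/2}" and "\<theta> / pi \<notin> \<rat>"
    and "\<forall>z \<in> path_image L1 \<union> path_image L2. norm (f z) = norm (g z)"
  shows "\<exists>\<beta>. norm \<beta> = 1 \<and> (\<forall>z \<in> ball 0 1. f z = \<beta> * g z)"
proof -
  obtain s t where st: "s \<in> {0<..<1}" "t \<in> {0<..<1}" "L1 s = L2 t"
    and v: "vector_derivative L1 (at s) \<noteq> 0" "vector_derivative L2 (at t) \<noteq> 0"
    and angle: "line_angle (vector_derivative L1 (at s)) (vector_derivative L2 (at t)) = \<theta>"
    using assms(5) unfolding curves_intersect_at_angle_def by blast
  have "L1 s \<in> path_image L1"
    using st(1) by (auto simp: path_image_def)
  hence "L1 s \<in> ball 0 1"
    using assms(3) by (auto simp: C1_curve_in_disc_def)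
  moreover have "eventually (\<lambda>x. norm (f (L1 x)) = norm (g (L1 x))) (at s)"
    using eventually_in_path_image_at_interior[OF st(1), where L = L1]
    by eventually_elim (use assms(8) in blast)
  moreover have "eventually (\<lambda>x. norm (f (L2 x)) = norm (g (L2 x))) (at t)"
    using eventually_in_path_image_at_interior[OF st(2), where L = L2]
    by eventually_elim (use assms(8) in blast)
  ultimately show ?thesis
    using unimodular_multiple_if_norm_eq_on_curves_at_irrational_angle[OF assms(1,2)
        open_ball connected_ball _ C1_curve_in_disc_has_vector_derivative[OF assms(3) st(1)] refl v(1)
        C1_curve_in_disc_has_vector_derivative[OF assms(4) st(2)] st(3)[symmetric] v(2)]
      angle assms(7)
    by simp
qed

end
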